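(* Let $q=p^e>2$ with $p$ prime, let $r\ge2$, $m=2r$, $D=\{x\in\mathbb{F}_{q^m}:\mathrm{Tr}_{q^r/q}(x^{q^r+1})=0\}=\{d_1,\dots,d_n\}$ with $n=q^{r-1}(q^r-q+1)$, and let $\alpha$ be a generator of $\mathbb{F}_{q^m}^*$. Let $G_1$ be the $(m+1)\times n$ matrix whose first row is $(1,\dots,1)$, whose second row is $(\mathrm{Tr}_{q^m/q}(d_1),\dots,\mathrm{Tr}_{q^m/q}(d_n))$, whose third row is $(\mathrm{Tr}_{q^m/q}(\alpha d_1)+1,\dots,\mathrm{Tr}_{q^m/q}(\alpha d_n)+1)$, and whose $(i+2)$-th row, for $2\le i\le m-1$, is $(\mathrm{Tr}_{q^m/q}(\alpha^i d_1),\dots,\mathrm{Tr}_{q^m/q}(\alpha^i d_n))$. Let $G_1'=[I_{m+1}:G_1]$ and let $\overline{\mathcal{C}_D}'$ be the linear code over $\mathbb{F}_q$ generated by $G_1'$. Then $\overline{\mathcal{C}_D}'$ has parameters $[n+m+1,\ m+1,\ d']$ with $d'\ge q^{r-1}(q^r-q^{r-1}-q+1)+1$, and $\overline{\mathcal{C}_D}'^{\perp}$ has parameters $[n+m+1,\ n,\ d'^{\perp}]$ with $2\le d'^{\perp}\le 3$.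
   Context: $\mathrm{Tr}_{q^k/q}$ is the trace map from $\mathbb{F}_{q^k}$ to $\mathbb{F}_q$; $I_{m+1}$ is the identity matrix of size $m+1$. The matrix $G_1$ is a generator matrix of $\{(\mathrm{Tr}_{q^m/q}(bx)+c)_{x\in D}:b\in\mathbb{F}_{q^m},c\in\mathbb{F}_q\}$. *)

theory Defs
  imports Main "HOL-Computational_Algebra.Primes"
begin

text \<open>The large field F_{q^m} is a finite field type 'a; the subfield F_q is the
  set of elements fixed by x \<mapsto> x^q.\<close>

definition subfield_q :: "nat \<Rightarrow> 'a::field set" where
  "subfield_q q = {x. x ^ q = x}"

definition trace :: "nat \<Rightarrow> nat \<Rightarrow> 'a::field \<Rightarrow> 'a" where
  "trace q k x = (\<Sum>i<k. x ^ (q ^ i))"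

text \<open>Words of length N: functions nat => 'a, zero outside {..<N}.\<close>
definition hamming_weight :: "nat \<Rightarrow> (nat \<Rightarrow> 'a::zero) \<Rightarrow> nat" where
  "hamming_weight N v = card {l. l < N \<and> v l \<noteq> 0}"

definition min_distance :: "nat \<Rightarrow> (nat \<Rightarrow> 'a::zero) set \<Rightarrow> nat" where
  "min_distance N C = Min {hamming_weight N v | v. v \<in> C \<and> v \<noteq> (\<lambda>_. 0)}"

definition gen_code :: "nat \<Rightarrow> nat \<Rightarrow> nat \<Rightarrow> (nat \<Rightarrow> nat \<Rightarrow> 'a::field) \<Rightarrow> (nat \<Rightarrow> 'a) set" where
  "gen_code q k N G = {(\<lambda>l. if l < N then (\<Sum>j<k. c j * G j l) else 0) | c.
                         \<forall>j<k. c j \<in> subfield_q q}"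

definition dual_code :: "nat \<Rightarrow> nat \<Rightarrow> (nat \<Rightarrow> 'a::field) set \<Rightarrow> (nat \<Rightarrow> 'a) set" where
  "dual_code q N C = {v. (\<forall>l. N \<le> l \<longrightarrow> v l = 0) \<and> (\<forall>l<N. v l \<in> subfield_q q)
                        \<and> (\<forall>c\<in>C. (\<Sum>l<N. v l * c l) = 0)}"

text \<open>An F_q-linear code has dimension k iff it has q^k elements.\<close>
definition has_dim :: "nat \<Rightarrow> (nat \<Rightarrow> 'a) set \<Rightarrow> nat \<Rightarrow> bool" where
  "has_dim q C k \<longleftrightarrow> finite C \<and> card C = q ^ k"

text \<open>The matrix G1 (rows 0..m, 0-indexed; columns 0..n-1, d enumerates D).\<close>
definition G1 :: "nat \<Rightarrow> nat \<Rightarrow> 'a::field \<Rightarrow> (nat \<Rightarrow> 'a) \<Rightarrow> nat \<Rightarrow> nat \<Rightarrow> 'a" where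
  "G1 q m \<alpha> d j l =
     (if j = 0 then 1
      else trace q m (\<alpha> ^ (j - 1) * d l) + (if j = 2 then 1 else 0))"

definition G1' :: "nat \<Rightarrow> nat \<Rightarrow> 'a::field \<Rightarrow> (nat \<Rightarrow> 'a) \<Rightarrow> nat \<Rightarrow> nat \<Rightarrow> 'a" where
  "G1' q m \<alpha> d j l =
     (if l < m + 1 then (if l = j then 1 else 0) else G1 q m \<alpha> d j (l - (m + 1)))"

end

(*
  Write K = F_{q^r}, T(x) = x + x^{q^r} and N(x) = x^{q^r+1} for the trace and the norm of
  F_{q^{2r}}/K, so that Tr_{q^{2r}/q} = Tr_{q^r/q} o T and D = {x. Tr_{q^r/q}(N x) = 0}.
  For (t, u) in K^2, the number of x with (T x, N x) = (t, u) plus the number of roots of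
  X^2 - t X + u in K is exactly 2: each count is at most 2, if both are positive the
  polynomial has a double root and each is at most 1, and summed over K^2 both give q^{2r}.
  Counting the x with (T x, N x) in a set S of K^2 therefore reduces to counting the pairs
  (t, z) in K^2 with (t, t z - z^2) in S, and for the sets S needed here these are cut out
  by Tr_{q^r/q}-linear conditions whose fibres have known sizes. This gives |D|, and
  |{x in D. Tr_{q^m/q}(b x) = c}| <= q^{2(r-1)} for b <> 0.

  A codeword of [I : G1] with coefficients c has check coordinates c_0 + c_2 + Tr(beta d_l)
  with beta = sum_j c_{j+1} alpha^j. As 1, alpha, ..., alpha^{m-1} are independent over F_q,
  beta = 0 only if the codeword is constant c_0 on D; otherwise at most q^{2(r-1)} check
  coordinates vanish, which gives the bound on d'. The systematic form gives both dimensions;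
  the dual has no word of weight 1 since the first row of G1 has no zero entry, and a word of
  weight 3 comes from the column of G1 at d_l = 0, which is e_0 + e_2.
*)

theory Submission
  imports Defs "HOL-Number_Theory.Residues" "HOL-Library.FuncSet" "HOL-Computational_Algebra.Polynomial"
begin

lemma sum_bounded_eq_imp_eq:
  fixes g :: "'b \<Rightarrow> nat"
  assumes "finite A" and "\<And>a. a \<in> A \<Longrightarrow> g a \<le> B" and "sum g A = card A * B" and "a \<in> A"
  shows "g a = B"
proof (rule ccontr)
  assume "g a \<noteq> B"
  with assms(2,4) have "g a < B" by (simp add: order_less_le)
  with assms have "sum g A < sum (\<lambda>_. B) A"
    by (intro sum_strict_mono_ex1) auto
  with assms(3) show False by simp
qed

lemma sum_lessThan_add:
  "(\<Sum>i<a + b. f i) = (\<Sum>i<a. f i) + (\<Sum>i<(b::nat). f (a + i))"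
  by (induction b) (simp_all add: ac_simps)

lemma card_eq_sum_card_fibers:
  assumes "finite A" and "finite B" and "f ` A \<subseteq> B"
  shows "card A = (\<Sum>b\<in>B. card {a\<in>A. f a = b})"
proof -
  have "card A = (\<Sum>a\<in>A. 1)" by simp
  also have "\<dots> = (\<Sum>b\<in>B. \<Sum>a\<in>{a\<in>A. f a = b}. 1)" by (rule sum.group[OF assms, symmetric])
  finally show ?thesis by simp
qed

lemma card_filter_Times_by_snd:
  assumes "finite A" and "finite B"
  shows "card {(a, b)\<in>A \<times> B. P a b} = (\<Sum>b\<in>B. card {a\<in>A. P a b})"
proof -
  let ?X = "{(a, b)\<in>A \<times> B. P a b}"
  have "card ?X = (\<Sum>b\<in>B. card {x\<in>?X. snd x = b})"
    using assms by (intro card_eq_sum_card_fibers) (auto intro: rev_finite_subset[of "A \<times> B"])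
  also have "\<dots> = (\<Sum>b\<in>B. card {a\<in>A. P a b})"
  proof (intro sum.cong refl)
    fix b assume "b \<in> B"
    then have "{x\<in>?X. snd x = b} = (\<lambda>a. (a, b)) ` {a\<in>A. P a b}" by auto
    then show "card {x\<in>?X. snd x = b} = card {a\<in>A. P a b}"
      by (simp add: card_image inj_on_def)
  qed
  finally show ?thesis .
qed

lemma card_filter_bij_betw:
  assumes "bij_betw d A B"
  shows "card {l\<in>A. P (d l)} = card {x\<in>B. P x}"
proof -
  have "{x\<in>B. P x} = d ` {l\<in>A. P (d l)}" and "inj_on d {l\<in>A. P (d l)}"
    using assms by (auto simp: bij_betw_def inj_on_def)
  then show ?thesis by (simp add: card_image)
qed

lemma sum_unit_mult:
  "finite A \<Longrightarrow> (\<Sum>i\<in>A. (if i = j then 1 else 0) * f i) = (if j \<in> A then f j else (0 :: 'a::semiring_1))"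
  by (induction A rule: finite_induct) auto

lemma quadratic_root_other:
  fixes y z t n :: "'a::field"
  assumes "z * z - t * z + n = 0" and "y * y - t * y + n = 0"
  shows "y = z \<or> y = t - z"
proof -
  have "(y - z) * (y + z - t) = (y * y - t * y + n) - (z * z - t * z + n)"
    by (simp add: algebra_simps)
  with assms have "(y - z) * (y + z - t) = 0" by simp
  then show ?thesis by (auto simp: eq_diff_eq)
qed

lemma card_quadratic_roots_le_2:
  fixes t n :: "'a::field"
  shows "card {y. y * y - t * y + n = 0} \<le> 2"
proof (cases "\<exists>z. z * z - t * z + n = 0")
  case True
  then obtain z where "z * z - t * z + n = 0" by blast
  then have "{y. y * y - t * y + n = 0} \<subseteq> {z, t - z}"
    using quadratic_root_other by blast
  then have "card {y. y * y - t * y + n = 0} \<le> card {z, t - z}"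
    by (intro card_mono) auto
  also have "\<dots> \<le> 2" by (simp add: card_insert_if)
  finally show ?thesis .
qed simp


lemma power_minus_1_dvd_power_minus_1:
  fixes a :: nat
  assumes "a > 0" and "k dvd n"
  shows "a ^ k - 1 dvd a ^ n - 1"
proof -
  obtain j where n: "n = k * j" using assms(2) by blast
  have "int (a ^ n - 1) = int (a ^ k) ^ j - 1"
    using assms(1) by (simp add: n power_mult of_nat_diff)
  also have "\<dots> = (int (a ^ k) - 1) * (\<Sum>i<j. int (a ^ k) ^ i)"
    by (rule power_diff_1_eq)
  also have "int (a ^ k) - 1 = int (a ^ k - 1)"
    using assms(1) by (simp add: of_nat_diff)
  finally have "int (a ^ k - 1) dvd int (a ^ n - 1)" by simp
  then show ?thesis by (simp only: int_dvd_int_iff)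
qed


section \<open>Linear codes\<close>

lemma hamming_weight_le: "hamming_weight N v \<le> N"
  unfolding hamming_weight_def by (rule order_trans[OF card_mono[of "{..<N}"]]) auto

lemma min_distance_le:
  assumes "v \<in> C" and "v \<noteq> (\<lambda>_. 0)"
  shows "min_distance N C \<le> hamming_weight N v"
  unfolding min_distance_def
  by (rule Min_le) (use assms hamming_weight_le in \<open>auto intro: finite_subset[of _ "{..N}"]\<close>)

lemma min_distance_ge:
  assumes "v \<in> C" and "v \<noteq> (\<lambda>_. 0)"
    and "\<And>v. v \<in> C \<Longrightarrow> v \<noteq> (\<lambda>_. 0) \<Longrightarrow> w \<le> hamming_weight N v"
  shows "w \<le> min_distance N C"
  unfolding min_distance_def
  by (subst Min_ge_iff) (use assms hamming_weight_le in \<open>auto intro: finite_subset[of _ "{..N}"]\<close>)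

definition systematic :: "nat \<Rightarrow> (nat \<Rightarrow> nat \<Rightarrow> 'a::zero_neq_one) \<Rightarrow> nat \<Rightarrow> nat \<Rightarrow> 'a" where
  "systematic k A j l = (if l < k then (if l = j then 1 else 0) else A j (l - k))"

definition encode :: "nat \<Rightarrow> nat \<Rightarrow> (nat \<Rightarrow> nat \<Rightarrow> 'a::comm_ring_1) \<Rightarrow> (nat \<Rightarrow> 'a) \<Rightarrow> nat \<Rightarrow> 'a" where
  "encode k t A c l = (if l < k + t then (\<Sum>j<k. c j * systematic k A j l) else 0)"

lemma encode_info: "l < k \<Longrightarrow> encode k t A c l = c l"
  by (simp add: encode_def systematic_def if_distrib[of "(*) _"] sum.delta cong: if_cong)

lemma encode_check: "i < t \<Longrightarrow> encode k t A c (k + i) = (\<Sum>j<k. c j * A j i)"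
  by (simp add: encode_def systematic_def)

lemma inner_encode:
  "(\<Sum>l<k + t. v l * encode k t A c l) = (\<Sum>j<k. c j * (v j + (\<Sum>i<t. v (k + i) * A j i)))"
proof -
  have "(\<Sum>l<k + t. v l * encode k t A c l) = (\<Sum>l<k + t. \<Sum>j<k. c j * (v l * systematic k A j l))"
    by (intro sum.cong refl) (simp add: encode_def sum_distrib_left mult_ac)
  also have "\<dots> = (\<Sum>j<k. c j * (\<Sum>l<k + t. v l * systematic k A j l))"
    by (subst sum.swap) (simp add: sum_distrib_left)
  also have "\<dots> = (\<Sum>j<k. c j * (v j + (\<Sum>i<t. v (k + i) * A j i)))"
    by (intro sum.cong refl arg_cong2[where f = "(*)"])
      (simp add: sum_lessThan_add systematic_def if_distrib[of "(*) _"] sum.delta cong: if_cong)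
  finally show ?thesis .
qed

lemma hamming_weight_encode_ge:
  assumes "j0 < k" and "c j0 \<noteq> 0"
  shows "Suc (card {i. i < t \<and> encode k t A c (k + i) \<noteq> 0}) \<le> hamming_weight (k + t) (encode k t A c)"
proof -
  let ?T = "{i. i < t \<and> encode k t A c (k + i) \<noteq> 0}"
  have "insert j0 ((+) k ` ?T) \<subseteq> {l. l < k + t \<and> encode k t A c l \<noteq> 0}"
    using assms by (auto simp: encode_info)
  moreover have "card (insert j0 ((+) k ` ?T)) = Suc (card ?T)"
    using assms(1) by (subst card_insert_disjoint) (auto simp: card_image)
  moreover have "card (insert j0 ((+) k ` ?T)) \<le> card {l. l < k + t \<and> encode k t A c l \<noteq> 0}"
    using calculation(1) by (intro card_mono) auto
  ultimately show ?thesis unfolding hamming_weight_def by simp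
qed

section \<open>Finite fields as extensions of \<open>F\<^sub>q\<close>\<close>

lemma generator_nonzero:
  fixes \<alpha> :: "'a::{finite,field}"
  assumes "card (UNIV :: 'a set) > 2" and "\<forall>x::'a. x \<noteq> 0 \<longrightarrow> (\<exists>k. x = \<alpha> ^ k)"
  shows "\<alpha> \<noteq> 0"
proof
  assume "\<alpha> = 0"
  have "x \<in> {0, 1}" for x :: 'a
  proof (cases "x = 0")
    case False
    then obtain k where "x = 0 ^ k" using assms(2) \<open>\<alpha> = 0\<close> by blast
    with False show ?thesis by (cases k) auto
  qed simp
  then have "UNIV \<subseteq> {0, 1 :: 'a}" by blast
  then have "card (UNIV :: 'a set) \<le> card {0, 1 :: 'a}" by (intro card_mono) auto
  with assms(1) show False by (simp add: card_insert_if)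
qed

locale finite_field_extension =
  fixes p e q n :: nat and \<alpha> :: "'a::{finite,field}"
  assumes prime_p: "prime p" and q_eq: "q = p ^ e" and q_gt_1: "q > 1"
    and card_UNIV_eq: "card (UNIV :: 'a set) = q ^ n"
    and alpha_nonzero: "\<alpha> \<noteq> 0"
    and generator: "\<forall>x::'a. x \<noteq> 0 \<longrightarrow> (\<exists>k. x = \<alpha> ^ k)"
begin

abbreviation Fq :: "'a set" where "Fq \<equiv> subfield_q q"

abbreviation Fqk :: "nat \<Rightarrow> 'a set" where "Fqk k \<equiv> {x. x ^ (q ^ k) = x}"

lemma mem_Fq [simp]: "x \<in> Fq \<longleftrightarrow> x ^ q = x"
  by (simp add: subfield_q_def)

lemma n_pos: "n > 0"
proof (rule ccontr)
  assume "\<not> n > 0"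
  then have "card (UNIV :: 'a set) = 1" using card_UNIV_eq by simp
  then show False by (metis card_1_singletonE singleton_iff UNIV_I zero_neq_one)
qed

lemma CHAR_eq: "CHAR('a) = p"
proof -
  have "prime CHAR('a)" by (rule prime_CHAR_semidom) (simp add: finite_imp_CHAR_pos)
  moreover have "CHAR('a) dvd p ^ (e * n)"
    using CHAR_dvd_CARD[where 'a='a] card_UNIV_eq q_eq by (simp add: power_mult)
  ultimately show ?thesis
    using prime_p prime_dvd_power primes_dvd_imp_eq by blast
qed

lemma frobenius_add: "(x + y :: 'a) ^ (q ^ i) = x ^ (q ^ i) + y ^ (q ^ i)"
  by (rule freshmans_dream') (auto simp: CHAR_eq prime_p q_eq power_mult[symmetric])

lemma frobenius_sum: "(sum f A :: 'a) ^ (q ^ i) = (\<Sum>x\<in>A. f x ^ (q ^ i))"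
  by (rule freshmans_dream_sum') (auto simp: CHAR_eq prime_p q_eq power_mult[symmetric])

lemma frobenius_uminus: "(- x :: 'a) ^ (q ^ i) = - (x ^ (q ^ i))"
proof -
  have "0 = (x + - x) ^ (q ^ i)" using q_gt_1 by simp
  also have "\<dots> = x ^ (q ^ i) + (- x) ^ (q ^ i)" by (rule frobenius_add)
  finally show ?thesis by (simp add: eq_neg_iff_add_eq_0 add.commute)
qed

lemma frobenius_diff: "(x - y :: 'a) ^ (q ^ i) = x ^ (q ^ i) - y ^ (q ^ i)"
  using frobenius_add[of x "- y" i] by (simp add: frobenius_uminus)

lemmas frobenius_q_add = frobenius_add[of _ _ 1, simplified]
lemmas frobenius_q_diff = frobenius_diff[of _ _ 1, simplified]
lemmas frobenius_q_uminus = frobenius_uminus[of _ 1, simplified]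

lemma power_q_power_n [simp]: "(x :: 'a) ^ (q ^ n) = x"
proof (cases "x = 0")
  case False
  have "x * (\<Prod>y\<in>UNIV-{0}. x * y) = x * x ^ (card (UNIV :: 'a set) - 1) * \<Prod>(UNIV-{0})"
    by (simp add: prod.distrib mult_ac)
  also have "x * x ^ (card (UNIV :: 'a set) - 1) = x ^ Suc (card (UNIV :: 'a set) - 1)"
    by simp
  also have "Suc (card (UNIV :: 'a set) - 1) = card (UNIV :: 'a set)"
    using finite_UNIV_card_ge_0[where 'a='a] by simp
  also have "(\<Prod>y\<in>UNIV-{0}. x * y) = (\<Prod>y\<in>UNIV-{0}. y)"
    by (rule prod.reindex_bij_witness[of _ "\<lambda>y. y / x" "\<lambda>y. x * y"]) (use False in auto)
  finally show ?thesis
    using card_UNIV_eq by simp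
qed (use n_pos q_gt_1 in simp)

lemma Fq_subset_Fqk: "x \<in> Fq \<Longrightarrow> x \<in> Fqk k"
proof (induction k)
  case (Suc k)
  have "x ^ (q ^ Suc k) = (x ^ q) ^ (q ^ k)" by (simp add: power_mult mult.commute)
  with Suc show ?case by simp
qed simp

lemma card_UNIV_gt_1: "card (UNIV :: 'a set) > 1"
  using card_UNIV_eq one_less_power[OF q_gt_1 n_pos] by simp

lemma power_q_power_n_minus_1:
  assumes "(x :: 'a) \<noteq> 0"
  shows "x ^ (q ^ n - 1) = 1"
proof -
  have "x * x ^ (q ^ n - 1) = x ^ Suc (q ^ n - 1)" by simp
  also have "Suc (q ^ n - 1) = q ^ n" using q_gt_1 by simp
  finally have "x * x ^ (q ^ n - 1) = x * 1" by simp
  then show ?thesis using assms by simp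
qed

lemma nonzero_eq_alpha_powers: "UNIV - {0} = (\<lambda>k. \<alpha> ^ k) ` {..<q ^ n - 1}"
proof (intro equalityI subsetI)
  fix x :: 'a assume "x \<in> UNIV - {0}"
  then obtain k where k: "x = \<alpha> ^ k" using generator by blast
  have "\<alpha> ^ k = \<alpha> ^ ((q ^ n - 1) * (k div (q ^ n - 1)) + k mod (q ^ n - 1))" by simp
  also have "\<dots> = \<alpha> ^ (k mod (q ^ n - 1))"
    by (simp only: power_add power_mult power_q_power_n_minus_1[OF alpha_nonzero]) simp
  finally show "x \<in> (\<lambda>k. \<alpha> ^ k) ` {..<q ^ n - 1}"
    using k card_UNIV_gt_1 card_UNIV_eq by auto
qed (use alpha_nonzero in auto)

lemma inj_on_alpha_powers: "inj_on (\<lambda>k. \<alpha> ^ k) {..<q ^ n - 1}"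
proof (rule eq_card_imp_inj_on)
  have "card (UNIV - {0::'a}) = q ^ n - 1" using card_UNIV_eq by (simp add: card_Diff_singleton)
  then show "card ((\<lambda>k. \<alpha> ^ k) ` {..<q ^ n - 1}) = card {..<q ^ n - 1}"
    using nonzero_eq_alpha_powers by simp
qed simp

lemma card_Fqk_ge:
  assumes dvd: "q ^ k - 1 dvd q ^ n - 1" and "k > 0"
  shows "card (Fqk k) \<ge> q ^ k"
proof -
  define Q where "Q = q ^ k"
  have Q: "Q > 1" using one_less_power[OF q_gt_1 \<open>k > 0\<close>] Q_def by simp
  define s where "s = (q ^ n - 1) div (Q - 1)"
  have s: "q ^ n - 1 = s * (Q - 1)" using dvd unfolding Q_def s_def by simp
  then have "s > 0" using card_UNIV_gt_1 card_UNIV_eq by (cases s) auto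
  \<comment> \<open>the subgroup of order \<open>Q - 1\<close> of the cyclic group \<open>\<langle>\<alpha>\<rangle>\<close>, together with 0, lies in \<open>Fqk k\<close>\<close>
  define A where "A = insert 0 ((\<lambda>i. \<alpha> ^ (s * i)) ` {..<Q - 1})"
  have "A \<subseteq> Fqk k"
  proof
    fix x assume "x \<in> A"
    then consider "x = 0" | i where "x = \<alpha> ^ (s * i)" unfolding A_def by auto
    then show "x \<in> Fqk k"
    proof cases
      case 2
      have "s * i * Q = (q ^ n - 1) * i + s * i" using s Q by (simp add: algebra_simps)
      then have "x ^ Q = (\<alpha> ^ (q ^ n - 1)) ^ i * \<alpha> ^ (s * i)"
        using 2 by (simp only: power_mult[symmetric] power_add[symmetric])
      then have "x ^ Q = x"
        using 2 by (simp only: power_q_power_n_minus_1[OF alpha_nonzero] power_one mult_1_left)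
      then show ?thesis by (simp add: Q_def)
    qed (use q_gt_1 Q_def in simp)
  qed
  moreover have "card A = Q"
  proof -
    have "inj_on (\<lambda>i. \<alpha> ^ (s * i)) {..<Q - 1}"
    proof (rule inj_onI)
      fix i j assume "i \<in> {..<Q - 1}" "j \<in> {..<Q - 1}" "\<alpha> ^ (s * i) = \<alpha> ^ (s * j)"
      moreover from this have "s * i < q ^ n - 1" "s * j < q ^ n - 1" using s \<open>s > 0\<close> by auto
      ultimately have "s * i = s * j" using inj_on_alpha_powers by (auto dest: inj_onD)
      then show "i = j" using \<open>s > 0\<close> by simp
    qed
    moreover have "0 \<notin> (\<lambda>i. \<alpha> ^ (s * i)) ` {..<Q - 1}" using alpha_nonzero by auto
    ultimately show ?thesis unfolding A_def using Q by (simp add: card_image)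
  qed
  ultimately show ?thesis unfolding Q_def by (metis card_mono finite)
qed

lemma card_Fqk_le:
  assumes "k > 0"
  shows "card (Fqk k) \<le> q ^ k"
proof -
  define P :: "'a poly" where "P = monom 1 (q ^ k) - [:0, 1:]"
  have Q: "q ^ k > 1" using one_less_power[OF q_gt_1 assms] by simp
  define j where "j = q ^ k - 2"
  have j: "q ^ k = Suc (Suc j)" unfolding j_def using Q by arith
  have "coeff P (q ^ k) = 1" by (simp add: P_def coeff_pCons j)
  then have "P \<noteq> 0" by auto
  moreover have "degree P \<le> q ^ k" unfolding P_def
    by (rule degree_diff_le) (use Q in \<open>auto simp: degree_monom_le\<close>)
  moreover have "{x. poly P x = 0} = Fqk k"
    by (auto simp: P_def poly_monom)
  ultimately show ?thesis using card_poly_roots_bound[of P] by simp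
qed

lemma card_Fqk: "k dvd n \<Longrightarrow> k > 0 \<Longrightarrow> card (Fqk k) = q ^ k"
  using q_gt_1 by (intro le_antisym card_Fqk_le card_Fqk_ge power_minus_1_dvd_power_minus_1) auto

lemma card_Fq: "card Fq = q"
  using card_Fqk[of 1] by (simp add: subfield_q_def)

lemma Fq_sum: "(\<And>a. a \<in> A \<Longrightarrow> f a \<in> Fq) \<Longrightarrow> sum f A \<in> Fq"
  using frobenius_sum[of f A 1] by simp


lemma trace_add: "trace q k (x + y :: 'a) = trace q k x + trace q k y"
  by (simp add: trace_def frobenius_add sum.distrib)

lemma trace_diff: "trace q k (x - y :: 'a) = trace q k x - trace q k y"
  by (simp add: trace_def frobenius_diff sum_subtractf)

lemma trace_zero [simp]: "trace q k (0 :: 'a) = 0"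
  using q_gt_1 by (simp add: trace_def zero_power)

lemma trace_sum: "trace q k (\<Sum>a\<in>A. f a :: 'a) = (\<Sum>a\<in>A. trace q k (f a))"
  unfolding trace_def frobenius_sum by (rule sum.swap)

lemma trace_scale: "c \<in> Fq \<Longrightarrow> trace q k (c * x :: 'a) = c * trace q k x"
  using Fq_subset_Fqk[of c] by (simp add: trace_def power_mult_distrib sum_distrib_left)

lemma trace_in_Fq:
  assumes "(x :: 'a) \<in> Fqk k"
  shows "trace q k x \<in> Fq"
proof -
  have "(trace q k x) ^ q = (\<Sum>i<k. x ^ (q ^ Suc i))"
    using frobenius_sum[of "\<lambda>i. x ^ (q ^ i)" "{..<k}" 1]
    by (simp add: trace_def power_mult[symmetric] mult.commute)
  also have "\<dots> = trace q k x"
  proof -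
    have "(\<Sum>i<k. x ^ (q ^ Suc i)) + x ^ (q ^ 0) = x ^ (q ^ 0) + (\<Sum>i<k. x ^ (q ^ Suc i))"
      by (rule add.commute)
    also have "\<dots> = (\<Sum>i<Suc k. x ^ (q ^ i))" by (rule sum.lessThan_Suc_shift[symmetric])
    also have "\<dots> = trace q k x + x ^ (q ^ 0)" using assms by (simp add: trace_def)
    finally show ?thesis by simp
  qed
  finally show ?thesis by simp
qed

lemma card_trace_kernel_le:
  assumes "k > 0"
  shows "card {x :: 'a. trace q k x = 0} \<le> q ^ (k - 1)"
proof -
  define P :: "'a poly" where "P = (\<Sum>i<k. monom 1 (q ^ i))"
  have "coeff P (q ^ (k - 1)) = (\<Sum>i<k. if i = k - 1 then 1 else 0)"
    using q_gt_1 by (simp add: P_def coeff_sum power_inject_exp)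
  also have "\<dots> = 1" using assms by simp
  finally have "P \<noteq> 0" by auto
  moreover have "degree P \<le> q ^ (k - 1)" unfolding P_def
  proof (rule degree_sum_le)
    fix i assume "i \<in> {..<k}"
    then have "q ^ i \<le> q ^ (k - 1)" using q_gt_1 by (intro power_increasing) auto
    then show "degree (monom (1::'a) (q ^ i)) \<le> q ^ (k - 1)"
      using degree_monom_le order_trans by blast
  qed simp
  moreover have "{x. poly P x = 0} = {x :: 'a. trace q k x = 0}"
    by (simp add: P_def poly_sum poly_monom trace_def)
  ultimately show ?thesis using card_poly_roots_bound[of P] by simp
qed

lemma card_trace_fiber:
  assumes "k dvd n" and "k > 0" and "s \<in> Fq"
  shows "card {t\<in>Fqk k. trace q k t = s} = q ^ (k - 1)"
proof -
  let ?fiber = "\<lambda>s. {t\<in>Fqk k. trace q k t = s}"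
  have le: "card (?fiber s) \<le> q ^ (k - 1)" for s
  proof (cases "?fiber s = {}")
    case False
    then obtain t0 where t0: "t0 \<in> ?fiber s" by blast
    have "card (?fiber s) = card ((\<lambda>t. t - t0) ` ?fiber s)" by (simp add: card_image inj_on_def)
    also have "\<dots> \<le> card {x :: 'a. trace q k x = 0}"
      by (rule card_mono) (use t0 in \<open>auto simp: trace_diff\<close>)
    finally show ?thesis using card_trace_kernel_le[OF \<open>k > 0\<close>] by simp
  qed (metis card.empty zero_le)
  have "card (Fqk k) = (\<Sum>s\<in>Fq. card (?fiber s))"
    by (intro card_eq_sum_card_fibers) (auto intro: trace_in_Fq)
  also have "card (Fqk k) = card Fq * q ^ (k - 1)"
    using card_Fqk[OF assms(1,2)] card_Fq assms(2) by (simp add: power_eq_if)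
  finally have "(\<Sum>s\<in>Fq. card (?fiber s)) = card Fq * q ^ (k - 1)" ..
  then show ?thesis
    using sum_bounded_eq_imp_eq[where g = "\<lambda>s. card (?fiber s)", OF _ le] assms(3) by simp
qed

lemma card_trace_fiber_scaled:
  assumes "k dvd n" and "k > 0" and "\<gamma> \<in> Fqk k" and "\<gamma> \<noteq> 0" and "s \<in> Fq"
  shows "card {t\<in>Fqk k. trace q k (\<gamma> * t) = s} = q ^ (k - 1)"
proof -
  have "{t\<in>Fqk k. trace q k (\<gamma> * t) = s} = (\<lambda>u. u / \<gamma>) ` {t\<in>Fqk k. trace q k t = s}"
  proof (intro equalityI subsetI)
    fix t assume "t \<in> {t\<in>Fqk k. trace q k (\<gamma> * t) = s}"
    then have "\<gamma> * t \<in> {t\<in>Fqk k. trace q k t = s}" and "t = (\<gamma> * t) / \<gamma>"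
      using assms(3,4) by (auto simp: power_mult_distrib)
    then show "t \<in> (\<lambda>u. u / \<gamma>) ` {t\<in>Fqk k. trace q k t = s}" by blast
  qed (use assms(3,4) in \<open>auto simp: power_divide\<close>)
  moreover have "inj_on (\<lambda>u. u / \<gamma>) {t\<in>Fqk k. trace q k t = s}"
    using assms(4) by (auto simp: inj_on_def)
  ultimately show ?thesis using card_trace_fiber[OF assms(1,2,5)] by (simp add: card_image)
qed

lemma trace_surj:
  assumes "k dvd n" and "k > 0" and "s \<in> Fq"
  obtains t where "t \<in> Fqk k" and "trace q k t = s"
proof -
  have "card {t\<in>Fqk k. trace q k t = s} \<noteq> 0"
    using card_trace_fiber[OF assms] q_gt_1 by simp
  then obtain t where "t \<in> {t\<in>Fqk k. trace q k t = s}" by (metis card.empty ex_in_conv)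
  with that show ?thesis by blast
qed

lemma trace_pair_surj:
  assumes "k dvd n" and "k > 0" and \<gamma>: "\<gamma> \<in> Fqk k" "\<gamma> \<notin> Fq" and "c \<in> Fq" "s \<in> Fq"
  obtains t where "t \<in> Fqk k" and "trace q k t = c" and "trace q k (\<gamma> * t) = s"
proof -
  obtain t0 where t0: "t0 \<in> Fqk k" "trace q k t0 = 1"
    using trace_surj[OF assms(1,2)] by (metis mem_Fq power_one)
  define c0 where "c0 = trace q k (\<gamma> * t0)"
  have c0: "c0 \<in> Fq" unfolding c0_def using \<gamma> t0 by (intro trace_in_Fq) (simp add: power_mult_distrib)
  \<comment> \<open>Otherwise \<open>Tr((\<gamma> - c0) t) = 0\<close> on all of \<open>Fqk k\<close>, since \<open>t - Tr(t) t0\<close> lies in the kernel.\<close>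
  obtain t1 where t1: "t1 \<in> Fqk k" "trace q k t1 = 0" "trace q k (\<gamma> * t1) = 1"
  proof (rule ccontr)
    note t1_intro = that
    assume no_t1: "\<not> thesis"
    have kernel: "trace q k (\<gamma> * t) = 0" if t: "t \<in> Fqk k" "trace q k t = 0" for t
    proof (rule ccontr)
      assume u: "trace q k (\<gamma> * t) \<noteq> 0"
      define v where "v = inverse (trace q k (\<gamma> * t))"
      have v: "v \<in> Fq"
        using t \<gamma> trace_in_Fq[of "\<gamma> * t" k] by (simp add: v_def power_mult_distrib power_inverse)
      have "t * v \<in> Fqk k" using t(1) Fq_subset_Fqk[OF v] by (simp add: power_mult_distrib)
      moreover have "trace q k (t * v) = 0"
        using trace_scale[OF v, of k t] t(2) by (simp add: mult.commute)
      moreover have "trace q k (\<gamma> * (t * v)) = 1"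
        using trace_scale[OF v, of k "\<gamma> * t"] u by (simp add: v_def mult_ac)
      ultimately show False using t1_intro no_t1 by blast
    qed
    have "trace q k ((\<gamma> - c0) * t) = 0" if t: "t \<in> Fqk k" for t
    proof -
      define a where "a = trace q k t"
      have a: "a \<in> Fq" unfolding a_def using t by (rule trace_in_Fq)
      have "t - a * t0 \<in> Fqk k" "trace q k (t - a * t0) = 0"
        using t t0 a Fq_subset_Fqk[OF a]
          by (auto simp: frobenius_diff power_mult_distrib trace_diff trace_scale a_def)
      then have "trace q k (\<gamma> * (t - a * t0)) = 0" by (rule kernel)
      then have "trace q k (\<gamma> * t) - a * c0 = 0"
        using a by (simp add: right_diff_distrib trace_diff c0_def trace_scale mult.left_commute[of \<gamma> a])
      moreover have "trace q k ((\<gamma> - c0) * t) = trace q k (\<gamma> * t) - c0 * a"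
        using c0 by (simp add: left_diff_distrib trace_diff trace_scale a_def)
      ultimately show ?thesis by (simp add: mult.commute)
    qed
    then have empty: "{t\<in>Fqk k. trace q k ((\<gamma> - c0) * t) = 1} = {}" by auto
    have "\<gamma> - c0 \<in> Fqk k" "\<gamma> - c0 \<noteq> 0"
      using \<gamma> c0 Fq_subset_Fqk[OF c0] by (auto simp: frobenius_diff)
    then have "card {t\<in>Fqk k. trace q k ((\<gamma> - c0) * t) = 1} = q ^ (k - 1)"
      by (intro card_trace_fiber_scaled[OF assms(1,2)]) simp_all
    from this[unfolded empty] show False using q_gt_1 by simp
  qed
  define t where "t = c * t0 + (s - c * c0) * t1"
  have "s - c * c0 \<in> Fq" using assms(5,6) c0 by (simp add: frobenius_q_diff power_mult_distrib)
  moreover have "c \<in> Fqk k" "s - c * c0 \<in> Fqk k"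
    using assms(5) \<open>s - c * c0 \<in> Fq\<close> Fq_subset_Fqk by blast+
  ultimately have "t \<in> Fqk k" and "trace q k t = c" and "trace q k (\<gamma> * t) = s"
    using assms(5) t0 t1
    by (simp_all add: t_def frobenius_add power_mult_distrib trace_add trace_scale distrib_left
        mult.left_commute[of \<gamma>] c0_def[symmetric])
  then show ?thesis by (rule that)
qed

lemma card_trace_pair_fiber:
  assumes "k dvd n" and "k \<ge> 2" and \<gamma>: "\<gamma> \<in> Fqk k" "\<gamma> \<notin> Fq" and "c \<in> Fq" "s \<in> Fq"
  shows "card {t\<in>Fqk k. trace q k t = c \<and> trace q k (\<gamma> * t) = s} = q ^ (k - 2)"
proof -
  define fiber where "fiber = (\<lambda>(c, s). {t\<in>Fqk k. trace q k t = c \<and> trace q k (\<gamma> * t) = s})"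
  \<comment> \<open>all fibres are translates of the kernel\<close>
  have card_fiber: "card (fiber (c, s)) = card (fiber (0, 0))" if cs: "c \<in> Fq" "s \<in> Fq" for c s
  proof -
    obtain t0 where t0: "t0 \<in> fiber (c, s)"
      using trace_pair_surj[OF assms(1) _ \<gamma> cs] assms(2) unfolding fiber_def by auto
    have "fiber (c, s) = (\<lambda>t. t + t0) ` fiber (0, 0)"
    proof (intro equalityI subsetI)
      fix t assume "t \<in> fiber (c, s)"
      then have "t - t0 \<in> fiber (0, 0)"
        using t0 by (simp add: fiber_def frobenius_diff trace_diff right_diff_distrib)
      then show "t \<in> (\<lambda>t. t + t0) ` fiber (0, 0)" by (metis diff_add_cancel imageI)
    qed (use t0 in \<open>auto simp: fiber_def frobenius_add trace_add distrib_left\<close>)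
    then show ?thesis by (simp add: card_image inj_on_def)
  qed
  have "card (Fqk k) = (\<Sum>cs\<in>Fq \<times> Fq. card {t\<in>Fqk k. (trace q k t, trace q k (\<gamma> * t)) = cs})"
    using \<gamma> by (intro card_eq_sum_card_fibers) (auto intro!: trace_in_Fq simp: power_mult_distrib)
  also have "\<dots> = (\<Sum>cs\<in>Fq \<times> Fq. card (fiber (0, 0)))"
  proof (intro sum.cong refl)
    fix cs assume "cs \<in> Fq \<times> Fq"
    then obtain c s where "cs = (c, s)" "c \<in> Fq" "s \<in> Fq" by blast
    then show "card {t\<in>Fqk k. (trace q k t, trace q k (\<gamma> * t)) = cs} = card (fiber (0, 0))"
      using card_fiber[of c s] by (simp add: fiber_def)
  qed
  finally have "q ^ k = q * q * card (fiber (0, 0))"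
    using card_Fqk[OF assms(1)] card_Fq assms(2) by (simp add: card_cartesian_product)
  moreover have "q ^ k = q * q * q ^ (k - 2)"
    using assms(2) by (metis le_add_diff_inverse mult.assoc power_add power2_eq_square)
  ultimately have "card (fiber (0, 0)) = q ^ (k - 2)" using q_gt_1 by simp
  then show ?thesis using card_fiber[OF assms(5,6)] by (simp add: fiber_def)
qed

definition alpha_span :: "nat \<Rightarrow> 'a set" where
  "alpha_span k = {(\<Sum>j<k. a j * \<alpha> ^ j) | a. \<forall>j<k. a j \<in> Fq}"

lemma alpha_spanI: "\<forall>j<k. a j \<in> Fq \<Longrightarrow> x = (\<Sum>j<k. a j * \<alpha> ^ j) \<Longrightarrow> x \<in> alpha_span k"
  unfolding alpha_span_def by blast

lemma card_alpha_span_le: "card (alpha_span k) \<le> q ^ k"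
proof -
  have "alpha_span k \<subseteq> (\<lambda>a. \<Sum>j<k. a j * \<alpha> ^ j) ` (PiE {..<k} (\<lambda>_. Fq))"
  proof
    fix x assume "x \<in> alpha_span k"
    then obtain a where a: "\<forall>j<k. a j \<in> Fq" "x = (\<Sum>j<k. a j * \<alpha> ^ j)"
      unfolding alpha_span_def by blast
    then have "restrict a {..<k} \<in> PiE {..<k} (\<lambda>_. Fq)" and "x = (\<Sum>j<k. restrict a {..<k} j * \<alpha> ^ j)"
      by auto
    then show "x \<in> (\<lambda>a. \<Sum>j<k. a j * \<alpha> ^ j) ` (PiE {..<k} (\<lambda>_. Fq))" by blast
  qed
  then have "card (alpha_span k) \<le> card (PiE {..<k} (\<lambda>_. Fq))"
    by (meson card_image_le card_mono finite_PiE finite_imageI finite_lessThan finite order_trans)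
  also have "\<dots> = q ^ k" by (simp add: card_PiE card_Fq)
  finally show ?thesis .
qed

lemma alpha_span_add: "x \<in> alpha_span k \<Longrightarrow> y \<in> alpha_span k \<Longrightarrow> x + y \<in> alpha_span k"
proof -
  assume "x \<in> alpha_span k" "y \<in> alpha_span k"
  then obtain a b where a: "\<forall>j<k. a j \<in> Fq" "x = (\<Sum>j<k. a j * \<alpha> ^ j)"
    and b: "\<forall>j<k. b j \<in> Fq" "y = (\<Sum>j<k. b j * \<alpha> ^ j)" unfolding alpha_span_def by blast
  then have "x + y = (\<Sum>j<k. (a j + b j) * \<alpha> ^ j)" and "\<forall>j<k. a j + b j \<in> Fq"
    by (simp_all add: sum.distrib distrib_right frobenius_q_add)
  then show ?thesis by (intro alpha_spanI) auto
qed

lemma alpha_span_scale: "x \<in> alpha_span k \<Longrightarrow> c \<in> Fq \<Longrightarrow> c * x \<in> alpha_span k"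
proof -
  assume "x \<in> alpha_span k" "c \<in> Fq"
  then obtain a where a: "\<forall>j<k. a j \<in> Fq" "x = (\<Sum>j<k. a j * \<alpha> ^ j)" unfolding alpha_span_def by blast
  then have "c * x = (\<Sum>j<k. (c * a j) * \<alpha> ^ j)" and "\<forall>j<k. c * a j \<in> Fq"
    using \<open>c \<in> Fq\<close> by (simp_all add: sum_distrib_left mult.assoc power_mult_distrib)
  then show ?thesis by (intro alpha_spanI) auto
qed

lemma alpha_power_in_span: "j < k \<Longrightarrow> \<alpha> ^ j \<in> alpha_span k"
proof -
  assume "j < k"
  have "(\<Sum>i<k. (if i = j then 1 else 0) * \<alpha> ^ i) = (\<Sum>i<k. if i = j then \<alpha> ^ i else 0)"
    by (intro sum.cong) auto
  then have "\<alpha> ^ j = (\<Sum>i<k. (if i = j then 1 else 0) * \<alpha> ^ i)"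
    using \<open>j < k\<close> by simp
  moreover have "\<forall>i<k. (if i = j then 1 else 0 :: 'a) \<in> Fq" using q_gt_1 by simp
  ultimately show ?thesis by (intro alpha_spanI)
qed

lemma alpha_times_span:
  assumes "\<alpha> ^ k \<in> alpha_span k" and "x \<in> alpha_span k"
  shows "\<alpha> * x \<in> alpha_span k"
proof -
  obtain a where a: "\<forall>j<k. a j \<in> Fq" "x = (\<Sum>j<k. a j * \<alpha> ^ j)"
    using assms(2) unfolding alpha_span_def by blast
  show ?thesis
  proof (cases k)
    case (Suc k')
    have "\<alpha> * x = (\<Sum>j<k'. a j * \<alpha> ^ Suc j) + a k' * \<alpha> ^ k"
      using Suc by (simp add: a(2) sum_distrib_left distrib_left mult_ac)
    also have "(\<Sum>j<k'. a j * \<alpha> ^ Suc j) = (\<Sum>j<k. (if j = 0 then 0 else a (j - 1)) * \<alpha> ^ j)"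
      unfolding Suc sum.lessThan_Suc_shift by simp
    finally have x: "\<alpha> * x = (\<Sum>j<k. (if j = 0 then 0 else a (j - 1)) * \<alpha> ^ j) + a k' * \<alpha> ^ k" .
    have "\<forall>j<k. (if j = 0 then 0 else a (j - 1)) \<in> Fq" using a(1) Suc q_gt_1 by auto
    then have "(\<Sum>j<k. (if j = 0 then 0 else a (j - 1)) * \<alpha> ^ j) \<in> alpha_span k"
      by (rule alpha_spanI) (rule refl)
    moreover have "a k' * \<alpha> ^ k \<in> alpha_span k"
      using a(1) Suc assms(1) by (intro alpha_span_scale) auto
    ultimately show ?thesis unfolding x by (rule alpha_span_add)
  next
    case 0
    then show ?thesis using a alpha_spanI[of 0 a 0] by simp
  qed
qed

lemma alpha_power_in_span_imp_ge:
  assumes "\<alpha> ^ k \<in> alpha_span k"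
  shows "k \<ge> n"
proof -
  have powers: "\<alpha> ^ N \<in> alpha_span k" for N
  proof (induction N)
    case 0
    then show ?case using assms alpha_power_in_span[of 0 k] by (cases k) auto
  next
    case (Suc N)
    then show ?case using alpha_times_span[OF assms] by simp
  qed
  have "x \<in> alpha_span k" for x
  proof (cases "x = 0")
    case True
    then show ?thesis using alpha_span_scale[OF powers[of 0], of 0] q_gt_1 by simp
  next
    case False
    then obtain N where "x = \<alpha> ^ N" using generator by blast
    then show ?thesis using powers by simp
  qed
  then have "UNIV = alpha_span k" by blast
  then have "q ^ n \<le> q ^ k" using card_alpha_span_le[of k] card_UNIV_eq by simp
  then show ?thesis using q_gt_1 by simp
qed

lemma alpha_powers_independent:
  assumes "k \<le> n" and "\<forall>j<k. c j \<in> Fq" and "(\<Sum>j<k. c j * \<alpha> ^ j) = 0"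
  shows "\<forall>j<k. c j = 0"
  using assms
proof (induction k)
  case (Suc k)
  have "c k = 0"
  proof (rule ccontr)
    assume "c k \<noteq> 0"
    have "(\<Sum>j<k. c j * \<alpha> ^ j) + c k * \<alpha> ^ k = 0" using Suc.prems by simp
    then have "c k * \<alpha> ^ k = - (\<Sum>j<k. c j * \<alpha> ^ j)"
      by (simp add: eq_neg_iff_add_eq_0 add.commute)
    then have "\<alpha> ^ k = - (\<Sum>j<k. c j * \<alpha> ^ j) / c k"
      using \<open>c k \<noteq> 0\<close> by (metis nonzero_mult_div_cancel_left)
    also have "\<dots> = (\<Sum>j<k. (- c j / c k) * \<alpha> ^ j)"
      by (simp add: sum_divide_distrib sum_negf[symmetric])
    finally have "\<alpha> ^ k = (\<Sum>j<k. (- c j / c k) * \<alpha> ^ j)" .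
    moreover have "\<forall>j<k. - c j / c k \<in> Fq"
      using Suc.prems by (simp add: power_divide frobenius_q_uminus)
    ultimately have "\<alpha> ^ k \<in> alpha_span k" by (intro alpha_spanI)
    then have "k \<ge> n" by (rule alpha_power_in_span_imp_ge)
    with Suc.prems(1) show False by simp
  qed
  moreover from this have "\<forall>j<k. c j = 0" using Suc.prems by (intro Suc.IH) auto
  ultimately show ?case using less_Suc_eq by auto
qed simp


lemma gen_code_systematic:
  fixes A :: "nat \<Rightarrow> nat \<Rightarrow> 'a"
  shows "gen_code q k (k + t) (systematic k A) = {encode k t A c | c. \<forall>j<k. c j \<in> Fq}"
  unfolding gen_code_def encode_def by (simp add: fun_eq_iff)

lemma encode_in_gen_code:
  fixes A :: "nat \<Rightarrow> nat \<Rightarrow> 'a"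
  shows "\<forall>j<k. c j \<in> Fq \<Longrightarrow> encode k t A c \<in> gen_code q k (k + t) (systematic k A)"
  unfolding gen_code_systematic by blast

lemma has_dim_gen_code_systematic:
  fixes A :: "nat \<Rightarrow> nat \<Rightarrow> 'a"
  shows "has_dim q (gen_code q k (k + t) (systematic k A)) k"
proof -
  have C: "gen_code q k (k + t) (systematic k A) = encode k t A ` PiE {..<k} (\<lambda>_. Fq)"
  proof (intro equalityI subsetI)
    fix v assume "v \<in> gen_code q k (k + t) (systematic k A)"
    then obtain c where c: "\<forall>j<k. c j \<in> Fq" "v = encode k t A c" unfolding gen_code_systematic by blast
    then have "v = encode k t A (restrict c {..<k})" "restrict c {..<k} \<in> PiE {..<k} (\<lambda>_. Fq)"
      by (auto simp: encode_def fun_eq_iff)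
    then show "v \<in> encode k t A ` PiE {..<k} (\<lambda>_. Fq)" by blast
  qed (auto intro: encode_in_gen_code)
  have "inj_on (encode k t A) (PiE {..<k} (\<lambda>_. Fq))"
  proof (rule inj_onI)
    fix c c' assume "c \<in> PiE {..<k} (\<lambda>_. Fq)" "c' \<in> PiE {..<k} (\<lambda>_. Fq)"
      and "encode k t A c = encode k t A c'"
    then show "c = c'" by (metis PiE_ext encode_info lessThan_iff)
  qed
  then show ?thesis
    unfolding has_dim_def C
      by (auto simp: card_image card_PiE card_Fq intro!: finite_imageI finite_PiE)
qed

lemma mem_dual_code_systematic:
  fixes A :: "nat \<Rightarrow> nat \<Rightarrow> 'a"
  shows "v \<in> dual_code q (k + t) (gen_code q k (k + t) (systematic k A)) \<longleftrightarrow>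
     (\<forall>l. k + t \<le> l \<longrightarrow> v l = 0) \<and> (\<forall>l<k + t. v l \<in> Fq)
     \<and> (\<forall>j<k. v j + (\<Sum>i<t. v (k + i) * A j i) = 0)"
proof -
  let ?unit = "\<lambda>j i. if i = j then 1 else 0 :: 'a"
  have "(\<forall>w\<in>gen_code q k (k + t) (systematic k A). (\<Sum>l<k + t. v l * w l) = 0)
          \<longleftrightarrow> (\<forall>j<k. v j + (\<Sum>i<t. v (k + i) * A j i) = 0)"
  proof
    assume orth: "\<forall>w\<in>gen_code q k (k + t) (systematic k A). (\<Sum>l<k + t. v l * w l) = 0"
    show "\<forall>j<k. v j + (\<Sum>i<t. v (k + i) * A j i) = 0"
    proof (intro allI impI)
      fix j assume "j < k"
      have "encode k t A (?unit j) \<in> gen_code q k (k + t) (systematic k A)"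
        using q_gt_1 by (intro encode_in_gen_code) simp
      with orth have "(\<Sum>l<k + t. v l * encode k t A (?unit j) l) = 0" by blast
      with \<open>j < k\<close> show "v j + (\<Sum>i<t. v (k + i) * A j i) = 0"
        by (simp add: inner_encode sum_unit_mult)
    qed
  qed (auto simp: gen_code_systematic inner_encode)
  then show ?thesis unfolding dual_code_def by (auto simp: subfield_q_def)
qed

lemma has_dim_dual_code_systematic:
  fixes A :: "nat \<Rightarrow> nat \<Rightarrow> 'a"
  assumes A: "\<And>j i. j < k \<Longrightarrow> i < t \<Longrightarrow> A j i \<in> Fq"
  shows "has_dim q (dual_code q (k + t) (gen_code q k (k + t) (systematic k A))) t"
proof -
  let ?D = "dual_code q (k + t) (gen_code q k (k + t) (systematic k A))"
  let ?P = "PiE {..<t} (\<lambda>_. Fq)"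
  \<comment> \<open>a dual word is determined by its last \<open>t\<close> coordinates, which are arbitrary\<close>
  define tail where "tail v = restrict (\<lambda>i. v (k + i)) {..<t}" for v :: "nat \<Rightarrow> 'a"
  define extend where "extend w = (\<lambda>l. if l < k then - (\<Sum>i<t. w i * A l i)
                         else if l < k + t then w (l - k) else 0)" for w :: "nat \<Rightarrow> 'a"
  have "bij_betw tail ?D ?P"
  proof (rule bij_betw_byWitness[where f' = extend])
    show "\<forall>v\<in>?D. extend (tail v) = v"
    proof
      fix v assume "v \<in> ?D"
      then have "v l = 0" if "k + t \<le> l" for l
        using that unfolding mem_dual_code_systematic by auto
      moreover have "v j = - (\<Sum>i<t. v (k + i) * A j i)" if "j < k" for j
        using that \<open>v \<in> ?D\<close> unfolding mem_dual_code_systematic by (auto simp: eq_neg_iff_add_eq_0)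
      ultimately show "extend (tail v) = v" by (auto simp: fun_eq_iff extend_def tail_def)
    qed
    show "\<forall>w\<in>?P. tail (extend w) = w"
      by (auto simp: fun_eq_iff tail_def extend_def PiE_def extensional_def)
    show "tail ` ?D \<subseteq> ?P"
    proof
      fix w assume "w \<in> tail ` ?D"
      then obtain v where "v \<in> ?D" "w = tail v" by blast
      then show "w \<in> ?P" unfolding mem_dual_code_systematic by (auto simp: tail_def)
    qed
    show "extend ` ?P \<subseteq> ?D"
    proof
      fix v assume "v \<in> extend ` ?P"
      then obtain w where w: "w \<in> ?P" "v = extend w" by blast
      have "v l \<in> Fq" if "l < k + t" for l
      proof (cases "l < k")
        case True
        have "(\<Sum>i<t. w i * A l i) \<in> Fq"
          using w(1) A True by (intro Fq_sum) (auto simp: power_mult_distrib PiE_iff)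
        then show ?thesis using True w(2) by (simp add: extend_def frobenius_q_uminus)
      qed (use w that in \<open>auto simp: extend_def PiE_iff\<close>)
      then show "v \<in> ?D"
        unfolding mem_dual_code_systematic w(2) by (auto simp: extend_def)
    qed
  qed
  then show ?thesis
    unfolding has_dim_def
      by (simp add: bij_betw_same_card bij_betw_finite card_PiE card_Fq finite_PiE)
qed


lemma hamming_weight_dual_code_systematic_ge_2:
  fixes A :: "nat \<Rightarrow> nat \<Rightarrow> 'a"
  assumes columns: "\<And>i. i < t \<Longrightarrow> \<exists>j<k. A j i \<noteq> 0"
    and v: "v \<in> dual_code q (k + t) (gen_code q k (k + t) (systematic k A))" "v \<noteq> (\<lambda>_. 0)"
  shows "2 \<le> hamming_weight (k + t) v"
proof (rule ccontr)
  assume "\<not> 2 \<le> hamming_weight (k + t) v"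
  then have weight: "card {l. l < k + t \<and> v l \<noteq> 0} \<le> 1" unfolding hamming_weight_def by simp
  have outside: "\<forall>l. k + t \<le> l \<longrightarrow> v l = 0" and checks: "\<forall>j<k. v j + (\<Sum>i<t. v (k + i) * A j i) = 0"
    using v(1) unfolding mem_dual_code_systematic by auto
  obtain l0 where "v l0 \<noteq> 0" using v(2) by auto
  with outside have "l0 < k + t" using not_le by blast
  have only: "v l = 0" if "l < k + t" "l \<noteq> l0" for l
  proof (rule ccontr)
    assume "v l \<noteq> 0"
    with that \<open>v l0 \<noteq> 0\<close> \<open>l0 < k + t\<close> have "{l, l0} \<subseteq> {l. l < k + t \<and> v l \<noteq> 0}" by auto
    then have "card {l, l0} \<le> card {l. l < k + t \<and> v l \<noteq> 0}" by (intro card_mono) auto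
    with that weight show False by simp
  qed
  show False
  proof (cases "l0 < k")
    case True
    have "(\<Sum>i<t. v (k + i) * A l0 i) = 0" using True by (intro sum.neutral) (auto intro!: only)
    then show False using checks True \<open>v l0 \<noteq> 0\<close> by auto
  next
    case False
    define i0 where "i0 = l0 - k"
    have i0: "i0 < t" "k + i0 = l0" using False \<open>l0 < k + t\<close> unfolding i0_def by auto
    obtain j where j: "j < k" "A j i0 \<noteq> 0" using columns[OF i0(1)] by blast
    have "(\<Sum>i<t. v (k + i) * A j i) = v l0 * A j i0"
      using i0 by (subst sum.remove[of _ i0]) (auto intro!: sum.neutral only)
    moreover have "v j = 0" using j False \<open>l0 < k + t\<close> by (intro only) auto
    ultimately show False using checks j \<open>v l0 \<noteq> 0\<close> by auto
  qed
qed

lemma parity_check_word_in_dual_code: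
  fixes A :: "nat \<Rightarrow> nat \<Rightarrow> 'a"
  assumes "i0 < t" and column: "\<And>j. j < k \<Longrightarrow> A j i0 \<in> Fq"
  obtains v where "v \<in> dual_code q (k + t) (gen_code q k (k + t) (systematic k A))" and "v \<noteq> (\<lambda>_. 0)"
    and "hamming_weight (k + t) v = Suc (card {j. j < k \<and> A j i0 \<noteq> 0})"
proof -
  \<comment> \<open>the \<open>i0\<close>-th row of the parity check matrix \<open>[-A\<^sup>T : I]\<close>, negated\<close>
  define v where "v l = (if l < k then A l i0 else if l = k + i0 then -1 else 0)" for l
  have "(\<Sum>i<t. v (k + i) * A j i) = - A j i0" for j
    using assms(1) by (subst sum.remove[of _ i0]) (auto simp: v_def intro!: sum.neutral)
  then have "v \<in> dual_code q (k + t) (gen_code q k (k + t) (systematic k A))"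
    using column assms(1) q_gt_1 unfolding mem_dual_code_systematic
      by (auto simp: v_def frobenius_q_uminus)
  moreover have "v \<noteq> (\<lambda>_. 0)" by (auto simp: fun_eq_iff v_def intro!: exI[of _ "k + i0"])
  moreover have "{l. l < k + t \<and> v l \<noteq> 0} = insert (k + i0) {j. j < k \<and> A j i0 \<noteq> 0}"
    using assms(1) by (auto simp: v_def)
  then have "hamming_weight (k + t) v = Suc (card {j. j < k \<and> A j i0 \<noteq> 0})"
    unfolding hamming_weight_def by simp
  ultimately show ?thesis by (rule that)
qed

end


section \<open>The quadratic extension \<open>F\<^sub>q\<^sub>^\<^sub>2\<^sub>r / F\<^sub>q\<^sub>^\<^sub>r\<close>\<close>

locale quadratic_extension = finite_field_extension p e q "2 * r" \<alpha>
  for p e q r and \<alpha> :: "'a::{finite,field}" +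
  assumes r_ge_2: "r \<ge> 2"
begin

abbreviation K :: "'a set" where "K \<equiv> Fqk r"

definition rel_trace :: "'a \<Rightarrow> 'a" where "rel_trace z = z + z ^ (q ^ r)"

definition rel_norm :: "'a \<Rightarrow> 'a" where "rel_norm z = z * z ^ (q ^ r)"

lemma power_q_power_r_twice [simp]: "(z :: 'a) ^ (q ^ r * q ^ r) = z"
  using power_q_power_n[of z] by (simp add: mult_2 power_add)

lemma rel_trace_in_K: "rel_trace z \<in> K"
  by (simp add: rel_trace_def frobenius_add power_mult[symmetric] add.commute)

lemma rel_norm_in_K: "rel_norm z \<in> K"
  by (simp add: rel_norm_def power_mult_distrib power_mult[symmetric] mult.commute)

lemma rel_norm_divide: "b \<noteq> 0 \<Longrightarrow> rel_norm (y / b) = inverse (rel_norm b) * rel_norm y"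
  by (simp add: rel_norm_def power_divide field_simps)

lemma trace_eq_trace_rel_trace: "trace q (2 * r) z = trace q r (rel_trace z)"
proof -
  have "trace q (2 * r) z = (\<Sum>i<r. z ^ (q ^ i)) + (\<Sum>i<r. z ^ (q ^ (r + i)))"
    unfolding trace_def mult_2 by (rule sum_lessThan_add)
  also have "(\<Sum>i<r. z ^ (q ^ (r + i))) = (\<Sum>i<r. (z ^ (q ^ r)) ^ (q ^ i))"
    by (simp add: power_add power_mult)
  finally show ?thesis by (simp add: trace_def rel_trace_def frobenius_add sum.distrib)
qed

lemma card_K: "card K = q ^ r"
  using card_Fqk[of r] r_ge_2 by simp

lemma q_mult_power_r_minus_1: "q * q ^ (r - 1) = q ^ r"
  using r_ge_2 by (simp flip: power_Suc)

lemma card_rel_fiber_plus_card_roots_le: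
  assumes "t \<in> K"
  shows "card {x. (rel_trace x, rel_norm x) = (t, u)}
           + card {(s, z)\<in>K \<times> K. (s, s * z - z * z) = (t, u)} \<le> 2"
proof -
  define R where "R = {y. y * y - t * y + u = 0}"
  have fiber_R: "{x. (rel_trace x, rel_norm x) = (t, u)} \<subseteq> R"
    unfolding R_def rel_trace_def rel_norm_def by (auto simp: algebra_simps)
  have roots_R: "{z\<in>K. z * z - t * z + u = 0} \<subseteq> R" unfolding R_def by auto
  have "{(s, z)\<in>K \<times> K. (s, s * z - z * z) = (t, u)} = (\<lambda>z. (t, z)) ` {z\<in>K. z * z - t * z + u = 0}"
    using assms by (auto simp: algebra_simps)
  then have roots: "card {(s, z)\<in>K \<times> K. (s, s * z - z * z) = (t, u)}
      = card {z\<in>K. z * z - t * z + u = 0}"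
    by (simp add: card_image inj_on_def)
  have a: "card {x. (rel_trace x, rel_norm x) = (t, u)} \<le> card R"
    by (rule card_mono[OF _ fiber_R]) simp
  have b: "card {z\<in>K. z * z - t * z + u = 0} \<le> card R" by (rule card_mono[OF _ roots_R]) simp
  have R: "card R \<le> 2" unfolding R_def by (rule card_quadratic_roots_le_2)
  show ?thesis
  proof (cases "\<exists>x z. rel_trace x = t \<and> rel_norm x = u \<and> z \<in> K \<and> z * z - t * z + u = 0")
    case True
    \<comment> \<open>a root in \<open>K\<close> and a preimage \<open>x\<close> force \<open>x \<in> K\<close>, hence \<open>t = 2x\<close> and \<open>x\<close> is a double root\<close>
    then obtain x z where x: "rel_trace x = t" "rel_norm x = u" and z: "z \<in> K" "z * z - t * z + u = 0"
      by blast
    have x_root: "x * x - t * x + u = 0"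
      using x unfolding rel_trace_def rel_norm_def by (auto simp: algebra_simps)
    then have "x = z \<or> x = t - z" by (rule quadratic_root_other[OF z(2)])
    then have "x \<in> K" using z assms by (auto simp: frobenius_diff)
    then have "t = x + x" using x by (simp add: rel_trace_def)
    then have "R \<subseteq> {x}" using quadratic_root_other[OF x_root] unfolding R_def by auto
    then have "card R \<le> 1" using card_mono[of "{x}" R] by simp
    then show ?thesis using a b roots by linarith
  next
    case False
    then have "{x. (rel_trace x, rel_norm x) = (t, u)} = {} \<or> {z\<in>K. z * z - t * z + u = 0} = {}"
      by auto
    then show ?thesis
    proof
      assume "{x. (rel_trace x, rel_norm x) = (t, u)} = {}"
      then have "card {x. (rel_trace x, rel_norm x) = (t, u)} = 0" by (simp only: card.empty)
      then show ?thesis using b roots R by linarith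
    next
      assume "{z\<in>K. z * z - t * z + u = 0} = {}"
      then have "card {z\<in>K. z * z - t * z + u = 0} = 0" by (simp only: card.empty)
      then show ?thesis using a roots R by linarith
    qed
  qed
qed

lemma card_rel_fiber_plus_card_roots:
  assumes "tu \<in> K \<times> K"
  shows "card {x. (rel_trace x, rel_norm x) = tu} + card {(s, z)\<in>K \<times> K. (s, s * z - z * z) = tu} = 2"
proof -
  let ?a = "\<lambda>tu. card {x. (rel_trace x, rel_norm x) = tu}"
  let ?b = "\<lambda>tu. card {(s, z)\<in>K \<times> K. (s, s * z - z * z) = tu}"
  have "card (UNIV :: 'a set) = (\<Sum>tu\<in>K \<times> K. card {x\<in>UNIV. (rel_trace x, rel_norm x) = tu})"
    by (rule card_eq_sum_card_fibers) (use rel_trace_in_K rel_norm_in_K in auto)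
  then have "card (UNIV :: 'a set) = (\<Sum>tu\<in>K \<times> K. ?a tu)" by simp
  moreover have "card (K \<times> K) = (\<Sum>tu\<in>K \<times> K. ?b tu)"
  proof -
    have "card (K \<times> K) = (\<Sum>tu\<in>K \<times> K. card {sz\<in>K \<times> K. (\<lambda>(s, z). (s, s * z - z * z)) sz = tu})"
      by (intro card_eq_sum_card_fibers) (auto simp: frobenius_diff power_mult_distrib)
    also have "\<dots> = (\<Sum>tu\<in>K \<times> K. ?b tu)"
      by (intro sum.cong refl arg_cong[where f = card]) auto
    finally show ?thesis .
  qed
  moreover have "card (UNIV :: 'a set) = card (K \<times> K)"
    using card_UNIV_eq card_K by (simp add: card_cartesian_product mult_2 power_add)
  ultimately have "(\<Sum>tu\<in>K \<times> K. ?a tu + ?b tu) = card (K \<times> K) * 2"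
    by (simp add: sum.distrib)
  moreover have "?a tu + ?b tu \<le> 2" if "tu \<in> K \<times> K" for tu
    using that card_rel_fiber_plus_card_roots_le by auto
  ultimately show ?thesis
    by (intro sum_bounded_eq_imp_eq[where g = "\<lambda>tu. ?a tu + ?b tu" and A = "K \<times> K"])
      (use assms in auto)
qed

theorem card_rel_trace_norm_preimage:
  assumes "S \<subseteq> K \<times> K"
  shows "card {x. (rel_trace x, rel_norm x) \<in> S} + card {(t, z)\<in>K \<times> K. (t, t * z - z * z) \<in> S}
           = 2 * card S"
proof -
  have "finite S" using assms by (rule finite_subset) simp
  have "card {x. (rel_trace x, rel_norm x) \<in> S}
          = (\<Sum>tu\<in>S. card {x\<in>{x. (rel_trace x, rel_norm x) \<in> S}. (rel_trace x, rel_norm x) = tu})"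
    using \<open>finite S\<close> by (intro card_eq_sum_card_fibers) auto
  also have "\<dots> = (\<Sum>tu\<in>S. card {x. (rel_trace x, rel_norm x) = tu})"
    by (intro sum.cong refl arg_cong[where f = card]) auto
  finally have a: "card {x. (rel_trace x, rel_norm x) \<in> S}
      = (\<Sum>tu\<in>S. card {x. (rel_trace x, rel_norm x) = tu})" .
  let ?B = "{(t, z)\<in>K \<times> K. (t, t * z - z * z) \<in> S}"
  have "card ?B = (\<Sum>tu\<in>S. card {sz\<in>?B. (\<lambda>(s, z). (s, s * z - z * z)) sz = tu})"
    using \<open>finite S\<close> by (intro card_eq_sum_card_fibers) (auto intro: rev_finite_subset[of "K \<times> K"])
  also have "\<dots> = (\<Sum>tu\<in>S. card {(s, z)\<in>K \<times> K. (s, s * z - z * z) = tu})"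
    by (intro sum.cong refl arg_cong[where f = card]) auto
  finally have b: "card ?B = (\<Sum>tu\<in>S. card {(s, z)\<in>K \<times> K. (s, s * z - z * z) = tu})" .
  have "card {x. (rel_trace x, rel_norm x) \<in> S} + card ?B = (\<Sum>tu\<in>S. 2)"
    unfolding a b sum.distrib[symmetric] using assms
    by (intro sum.cong refl card_rel_fiber_plus_card_roots) auto
  then show ?thesis by simp
qed

definition hermitian_zeros :: "'a set" where
  "hermitian_zeros = {x. trace q r (x ^ (q ^ r + 1)) = 0}"

lemma mem_hermitian_zeros: "x \<in> hermitian_zeros \<longleftrightarrow> trace q r (rel_norm x) = 0"
  by (simp add: hermitian_zeros_def rel_norm_def)

lemma card_trace_fiber_K: "c \<in> Fq \<Longrightarrow> card {t\<in>K. trace q r t = c} = q ^ (r - 1)"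
  using card_trace_fiber[of r c] r_ge_2 by simp

lemma card_trace_fiber_scaled_K:
  "\<beta> \<in> K \<Longrightarrow> \<beta> \<noteq> 0 \<Longrightarrow> c \<in> Fq \<Longrightarrow> card {t\<in>K. trace q r (\<beta> * t) = c} = q ^ (r - 1)"
  using card_trace_fiber_scaled[of r \<beta> c] r_ge_2 by simp

lemma trace_K_mult_in_Fq: "a \<in> K \<Longrightarrow> b \<in> K \<Longrightarrow> trace q r (a * b) \<in> Fq"
  by (intro trace_in_Fq) (simp add: power_mult_distrib)

theorem card_hermitian_zeros: "card hermitian_zeros = q ^ (r - 1) * (q ^ r - q + 1)"
proof -
  define u where "u = q ^ (r - 1)"
  have qu: "q ^ r = q * u" unfolding u_def using q_mult_power_r_minus_1 by simp
  define A where "A = {n\<in>K. trace q r n = 0}"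
  have "K \<times> A \<subseteq> K \<times> K" unfolding A_def by auto
  note preimage = card_rel_trace_norm_preimage[OF this]
  have "{x. (rel_trace x, rel_norm x) \<in> K \<times> A} = hermitian_zeros"
    using rel_trace_in_K rel_norm_in_K by (auto simp: A_def mem_hermitian_zeros)
  moreover have "card (K \<times> A) = q * u * u"
    using card_K card_trace_fiber_K[of 0] q_gt_1
      by (simp add: A_def card_cartesian_product qu u_def)
  moreover have "card {(t, z)\<in>K \<times> K. (t, t * z - z * z) \<in> K \<times> A} = q * u + (q * u - 1) * u"
  proof -
    have card_K_minus_0: "card (K - {0}) = q * u - 1"
      using card_K q_gt_1 unfolding qu[symmetric] by (subst card_Diff_singleton) auto
    have "card {(t, z)\<in>K \<times> K. (t, t * z - z * z) \<in> K \<times> A}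
          = card {(t, z)\<in>K \<times> K. trace q r (z * t) = trace q r (z * z)}"
      by (intro arg_cong[where f = card])
        (auto simp: A_def trace_diff mult.commute frobenius_diff power_mult_distrib)
    also have "\<dots> = (\<Sum>z\<in>K. card {t\<in>K. trace q r (z * t) = trace q r (z * z)})"
      by (rule card_filter_Times_by_snd) simp_all
    also have "\<dots> = card {t\<in>K. trace q r (0 * t) = trace q r (0 * 0)}
                     + (\<Sum>z\<in>K - {0}. card {t\<in>K. trace q r (z * t) = trace q r (z * z)})"
      using q_gt_1 by (subst sum.remove[of _ 0]) simp_all
    also have "(\<Sum>z\<in>K - {0}. card {t\<in>K. trace q r (z * t) = trace q r (z * z)}) = (\<Sum>z\<in>K - {0}. u)"
      unfolding u_def by (intro sum.cong refl card_trace_fiber_scaled_K trace_K_mult_in_Fq) auto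
    finally show ?thesis using card_K card_K_minus_0 qu by simp
  qed
  ultimately have "card hermitian_zeros + (q * u + (q * u - 1) * u) = 2 * (q * u * u)"
    using preimage by simp
  moreover have "u \<ge> 1" "q * u \<ge> q" unfolding u_def using q_gt_1 by simp_all
  ultimately have "int (card hermitian_zeros) + (int q * int u + (int q * int u - 1) * int u)
      = 2 * (int q * int u * int u)"
    by (metis (mono_tags) le_trans of_nat_1 of_nat_add of_nat_diff of_nat_mult of_nat_numeral
        q_gt_1 less_imp_le_nat mult_le_mono2 nat_mult_1_right)
  then have "int (card hermitian_zeros) = int u * (int q * int u - int q + 1)"
    by (simp add: algebra_simps)
  also have "\<dots> = int (u * (q * u - q + 1))"
  proof -
    have "int (q * u - q) = int q * int u - int q" using \<open>q * u \<ge> q\<close> by (simp add: of_nat_diff)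
    moreover have "int (u * (q * u - q + 1)) = int u * (int (q * u - q) + 1)"
      by (simp only: of_nat_mult of_nat_add of_nat_1)
    ultimately show ?thesis by simp
  qed
  finally show ?thesis unfolding qu u_def by (simp only: of_nat_eq_iff)
qed

lemma card_pairs_trace_conditions_ge:
  assumes \<beta>: "\<beta> \<in> K" "\<beta> \<noteq> 0" and c: "c \<in> Fq"
  shows "q ^ (r - 1) * q ^ (r - 1)
           \<le> card {(t, z)\<in>K \<times> K. trace q r t = c \<and> trace q r (\<beta> * (t * z - z * z)) = 0}"
proof -
  define h where "h z = card {t\<in>K. trace q r t = c \<and> trace q r (\<beta> * (t * z - z * z)) = 0}" for z
  \<comment> \<open>for \<open>z \<noteq> 0\<close> the second condition is \<open>Tr(\<beta> z t) = Tr(\<beta> z z)\<close>,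
      independent of the first iff \<open>\<beta> z \<notin> F\<^sub>q\<close>\<close>
  define Z where "Z = {z\<in>K. \<beta> * z \<notin> Fq}"
  have h0: "h 0 = q ^ (r - 1)"
    unfolding h_def using card_trace_fiber_K[OF c] by simp
  have hZ: "h z = q ^ (r - 2)" if "z \<in> Z" for z
  proof -
    have "{t\<in>K. trace q r t = c \<and> trace q r (\<beta> * (t * z - z * z)) = 0}
        = {t\<in>K. trace q r t = c \<and> trace q r ((\<beta> * z) * t) = trace q r (\<beta> * z * z)}"
      by (auto simp: right_diff_distrib trace_diff mult_ac)
    also have "card \<dots> = q ^ (r - 2)"
      using that \<beta> c r_ge_2
      by (intro card_trace_pair_fiber trace_K_mult_in_Fq) (auto simp: Z_def power_mult_distrib)
    finally show ?thesis unfolding h_def .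
  qed
  have "card Z = q ^ r - q"
  proof -
    have "{z\<in>K. \<beta> * z \<in> Fq} = (\<lambda>l. l / \<beta>) ` Fq"
    proof (intro equalityI subsetI)
      fix z assume "z \<in> {z\<in>K. \<beta> * z \<in> Fq}"
      moreover have "z = (\<beta> * z) / \<beta>" using \<beta> by simp
      ultimately show "z \<in> (\<lambda>l. l / \<beta>) ` Fq" by blast
    qed (use \<beta> Fq_subset_Fqk in \<open>auto simp: power_divide\<close>)
    then have "card {z\<in>K. \<beta> * z \<in> Fq} = q"
      using \<beta> card_Fq by (simp add: card_image inj_on_def)
    moreover have "card K = card Z + card {z\<in>K. \<beta> * z \<in> Fq}"
      unfolding Z_def by (subst card_Un_disjoint[symmetric]) (auto intro: arg_cong[where f = card])
    ultimately show ?thesis using card_K by simp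
  qed
  have "0 \<notin> Z" "insert 0 Z \<subseteq> K" using q_gt_1 by (auto simp: Z_def)
  have "card {(t, z)\<in>K \<times> K. trace q r t = c \<and> trace q r (\<beta> * (t * z - z * z)) = 0} = (\<Sum>z\<in>K. h z)"
    unfolding h_def by (rule card_filter_Times_by_snd) simp_all
  also have "(\<Sum>z\<in>K. h z) \<ge> (\<Sum>z\<in>insert 0 Z. h z)"
    using \<open>insert 0 Z \<subseteq> K\<close> by (intro sum_mono2) auto
  also have "(\<Sum>z\<in>insert 0 Z. h z) = q ^ (r - 1) + (q ^ r - q) * q ^ (r - 2)"
    using \<open>0 \<notin> Z\<close> h0 hZ \<open>card Z = q ^ r - q\<close> by (simp add: Z_def)
  also have "q ^ (r - 1) + (q ^ r - q) * q ^ (r - 2) = q ^ (r - 1) * q ^ (r - 1)"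
  proof -
    obtain j where r: "r = j + 2" using r_ge_2 by (metis le_add_diff_inverse2)
    define v where "v = q ^ j"
    have "v \<ge> 1" using q_gt_1 by (simp add: v_def)
    then have le: "q * v \<le> q * q * v * v" using q_gt_1 by (simp add: mult_le_mono)
    have "q ^ (r - 1) = q * v" "q ^ r = q * q * v" "q ^ (r - 2) = v"
      unfolding r v_def by simp_all
    moreover have "(q * q * v - q) * v = q * q * v * v - q * v" by (simp add: diff_mult_distrib)
    moreover have "q * v * (q * v) = q * q * v * v" by (simp add: mult_ac)
    ultimately show ?thesis using le by simp
  qed
  finally show ?thesis .
qed

theorem card_hermitian_zeros_trace_fiber_le:
  assumes "b \<noteq> 0" and c: "c \<in> Fq"
  shows "card {x\<in>hermitian_zeros. trace q (2 * r) (b * x) = c} \<le> q ^ (r - 1) * q ^ (r - 1)"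
proof -
  define \<beta> where "\<beta> = inverse (rel_norm b)"
  have "rel_norm b \<noteq> 0" using assms(1) by (simp add: rel_norm_def)
  then have \<beta>: "\<beta> \<in> K" "\<beta> \<noteq> 0"
    using rel_norm_in_K[of b] by (simp_all add: \<beta>_def power_inverse)
  \<comment> \<open>substituting \<open>y = b x\<close> turns the conditions into conditions on \<open>(rel_trace y, rel_norm y)\<close>\<close>
  define S where "S = {t\<in>K. trace q r t = c} \<times> {u\<in>K. trace q r (\<beta> * u) = 0}"
  have "S \<subseteq> K \<times> K" unfolding S_def by auto
  have card_S: "card S = q ^ (r - 1) * q ^ (r - 1)"
    unfolding S_def card_cartesian_product
    using card_trace_fiber_K[OF c] card_trace_fiber_scaled_K[OF \<beta>, of 0] q_gt_1 by simp
  define Y where "Y = {y. (rel_trace y, rel_norm y) \<in> S}"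
  have "{x\<in>hermitian_zeros. trace q (2 * r) (b * x) = c} = (\<lambda>y. y / b) ` Y"
  proof (intro equalityI subsetI)
    fix x assume x: "x \<in> {x\<in>hermitian_zeros. trace q (2 * r) (b * x) = c}"
    have "rel_norm x = \<beta> * rel_norm (b * x)"
      using rel_norm_divide[OF assms(1), of "b * x"] assms(1) by (simp add: \<beta>_def)
    then have "b * x \<in> Y"
      using x rel_trace_in_K rel_norm_in_K
      by (auto simp: Y_def S_def mem_hermitian_zeros trace_eq_trace_rel_trace)
    moreover have "x = (b * x) / b" using assms(1) by simp
    ultimately show "x \<in> (\<lambda>y. y / b) ` Y" by blast
  next
    fix x assume "x \<in> (\<lambda>y. y / b) ` Y"
    then obtain y where y: "y \<in> Y" "x = y / b" by blast
    have "rel_norm x = \<beta> * rel_norm y" unfolding y(2) \<beta>_def by (rule rel_norm_divide[OF assms(1)])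
    moreover have "b * x = y" using assms(1) y(2) by simp
    ultimately show "x \<in> {x\<in>hermitian_zeros. trace q (2 * r) (b * x) = c}"
      using y(1)
      by (auto simp: Y_def S_def mem_hermitian_zeros trace_eq_trace_rel_trace)
  qed
  moreover have "inj_on (\<lambda>y. y / b) Y" using assms(1) by (auto simp: inj_on_def)
  moreover have "{(t, z)\<in>K \<times> K. (t, t * z - z * z) \<in> S}
      = {(t, z)\<in>K \<times> K. trace q r t = c \<and> trace q r (\<beta> * (t * z - z * z)) = 0}"
    unfolding S_def by (auto simp: frobenius_diff power_mult_distrib)
  ultimately show ?thesis
    using card_rel_trace_norm_preimage[OF \<open>S \<subseteq> K \<times> K\<close>] card_S
      card_pairs_trace_conditions_ge[OF \<beta> c]
    by (simp add: card_image Y_def)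
qed

end

section \<open>The code \<open>C\<^sub>D'\<close>\<close>

lemma G1'_eq_systematic: "G1' q m \<alpha> d = systematic (m + 1) (G1 q m \<alpha> d)"
  by (simp add: fun_eq_iff G1'_def systematic_def)

locale hermitian_code = quadratic_extension p e q r \<alpha> for p e q r and \<alpha> :: "'a::{finite,field}" +
  fixes d :: "nat \<Rightarrow> 'a" and n :: nat
  assumes n_eq: "n = card hermitian_zeros" and d_bij: "bij_betw d {..<n} hermitian_zeros"
begin

abbreviation G :: "nat \<Rightarrow> nat \<Rightarrow> 'a" where "G \<equiv> G1 q (2 * r) \<alpha> d"

lemma G_in_Fq: "G j i \<in> Fq"
  using trace_in_Fq[of "\<alpha> ^ (j - 1) * d i" "2 * r"] q_gt_1
  by (auto simp: G1_def frobenius_q_add)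

lemma encode_G_check:
  assumes c: "\<forall>j<2 * r + 1. c j \<in> Fq" and "i < n"
  shows "encode (2 * r + 1) n G c (2 * r + 1 + i)
           = c 0 + c 2 + trace q (2 * r) ((\<Sum>j<2 * r. c (Suc j) * \<alpha> ^ j) * d i)"
proof -
  have "encode (2 * r + 1) n G c (2 * r + 1 + i) = (\<Sum>j<Suc (2 * r). c j * G j i)"
    using encode_check[OF \<open>i < n\<close>, of "2 * r + 1" G c] by simp
  also have "\<dots> = c 0 + (\<Sum>j<2 * r. c (Suc j) * G (Suc j) i)"
    unfolding sum.lessThan_Suc_shift by (simp add: G1_def)
  also have "(\<Sum>j<2 * r. c (Suc j) * G (Suc j) i)
      = (\<Sum>j<2 * r. trace q (2 * r) (c (Suc j) * \<alpha> ^ j * d i))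
        + (\<Sum>j<2 * r. if j = 1 then c (Suc j) else 0)"
    unfolding sum.distrib[symmetric]
    using c by (intro sum.cong refl) (simp add: G1_def distrib_left mult.assoc trace_scale)
  also have "(\<Sum>j<2 * r. if j = 1 then c (Suc j) else 0) = c 2"
    using r_ge_2 by (simp add: numeral_2_eq_2)
  also have "(\<Sum>j<2 * r. trace q (2 * r) (c (Suc j) * \<alpha> ^ j * d i))
      = trace q (2 * r) ((\<Sum>j<2 * r. c (Suc j) * \<alpha> ^ j) * d i)"
    by (simp add: trace_sum sum_distrib_right)
  finally show ?thesis by (simp add: add_ac)
qed

lemma weight_bound_eq: "q ^ (r - 1) * (q ^ r - q ^ (r - 1) - q + 1) = n - q ^ (r - 1) * q ^ (r - 1)"
proof -
  define u where "u = q ^ (r - 1)"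
  have qu: "q ^ r = q * u" unfolding u_def using q_mult_power_r_minus_1 by simp
  have "q ^ 1 \<le> q ^ (r - 1)" using r_ge_2 q_gt_1 by (intro power_increasing) auto
  then have "u \<ge> q" unfolding u_def by simp
  moreover have "q * u \<ge> 2 * u" using q_gt_1 by simp
  ultimately have "q * u \<ge> u + q" by linarith
  then have "q * u - q + 1 - u = q * u - u - q + 1" by arith
  moreover have "n - u * u = u * (q * u - q + 1 - u)"
    using card_hermitian_zeros n_eq unfolding u_def[symmetric] qu by (simp add: diff_mult_distrib2)
  ultimately show ?thesis unfolding u_def[symmetric] qu by simp
qed

theorem hamming_weight_code_ge:
  assumes c: "\<forall>j<2 * r + 1. c j \<in> Fq" and "j0 < 2 * r + 1" "c j0 \<noteq> 0"
  shows "q ^ (r - 1) * (q ^ r - q ^ (r - 1) - q + 1) + 1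
           \<le> hamming_weight (2 * r + 1 + n) (encode (2 * r + 1) n G c)"
proof -
  define \<beta> where "\<beta> = (\<Sum>j<2 * r. c (Suc j) * \<alpha> ^ j)"
  define T where "T = {i. i < n \<and> encode (2 * r + 1) n G c (2 * r + 1 + i) \<noteq> 0}"
  have check: "encode (2 * r + 1) n G c (2 * r + 1 + i) = c 0 + c 2 + trace q (2 * r) (\<beta> * d i)"
    if "i < n" for i
    using encode_G_check[OF c that] by (simp add: \<beta>_def)
  have "n - q ^ (r - 1) * q ^ (r - 1) \<le> card T"
  proof (cases "\<beta> = 0")
    case True
    \<comment> \<open>then \<open>c\<^sub>1 = \<dots> = c\<^sub>2\<^sub>r = 0\<close>, so \<open>c\<^sub>0 \<noteq> 0\<close> is the constant value of all check coordinates\<close>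
    then have zero: "\<forall>j<2 * r. c (Suc j) = 0"
      using c by (intro alpha_powers_independent) (auto simp: \<beta>_def)
    have "j0 = 0"
    proof (rule ccontr)
      assume "j0 \<noteq> 0"
      then obtain j where "j0 = Suc j" by (cases j0) auto
      with zero \<open>j0 < 2 * r + 1\<close> \<open>c j0 \<noteq> 0\<close> show False by auto
    qed
    moreover have "c 2 = 0" using zero[rule_format, of 1] r_ge_2 by (simp add: numeral_2_eq_2)
    ultimately have "T = {..<n}"
      using \<open>c j0 \<noteq> 0\<close> True check by (auto simp: T_def)
    then show ?thesis by simp
  next
    case False
    define s where "s = - (c 0 + c 2)"
    have "c 0 \<in> Fq" "c 2 \<in> Fq" using c r_ge_2 by auto
    then have "s \<in> Fq" unfolding s_def by (simp only: mem_Fq frobenius_q_add frobenius_q_uminus)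
    have key: "c 0 + c 2 + x = 0 \<longleftrightarrow> x = s" for x
      unfolding s_def eq_neg_iff_add_eq_0 by (simp add: add.commute)
    have "T = {..<n} - {i. i < n \<and> trace q (2 * r) (\<beta> * d i) = s}"
      using check key by (auto simp: T_def)
    then have "card T = n - card {i. i < n \<and> trace q (2 * r) (\<beta> * d i) = s}"
      by (simp add: card_Diff_subset subset_eq)
    moreover have "card {i. i < n \<and> trace q (2 * r) (\<beta> * d i) = s}
        = card {x\<in>hermitian_zeros. trace q (2 * r) (\<beta> * x) = s}"
      using card_filter_bij_betw[OF d_bij, of "\<lambda>x. trace q (2 * r) (\<beta> * x) = s"] by simp
    ultimately show ?thesis
      using card_hermitian_zeros_trace_fiber_le[OF False \<open>s \<in> Fq\<close>] by (simp add: diff_le_mono2)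
  qed
  then show ?thesis
    using hamming_weight_encode_ge[of j0 "2 * r + 1" c n G] assms(2,3) weight_bound_eq
    by (simp add: T_def)
qed

abbreviation code where
  "code \<equiv> gen_code q (2 * r + 1) (2 * r + 1 + n) (systematic (2 * r + 1) G)"

abbreviation dual where
  "dual \<equiv> dual_code q (2 * r + 1 + n) code"

lemma min_distance_code_ge:
  "q ^ (r - 1) * (q ^ r - q ^ (r - 1) - q + 1) + 1 \<le> min_distance (2 * r + 1 + n) code"
proof (rule min_distance_ge)
  let ?unit = "\<lambda>i. if i = 0 then 1 else 0 :: 'a"
  show "encode (2 * r + 1) n G ?unit \<in> code"
    using q_gt_1 by (intro encode_in_gen_code) simp
  have "encode (2 * r + 1) n G ?unit 0 = 1" by (simp add: encode_info)
  then show "encode (2 * r + 1) n G ?unit \<noteq> (\<lambda>_. 0)"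
    by (auto simp: fun_eq_iff intro!: exI[of _ 0])
next
  fix v assume "v \<in> code" and "v \<noteq> (\<lambda>_. 0)"
  then obtain c where c: "\<forall>j<2 * r + 1. c j \<in> Fq" and v: "v = encode (2 * r + 1) n G c"
    unfolding gen_code_systematic by blast
  have "\<exists>j0<2 * r + 1. c j0 \<noteq> 0"
  proof (rule ccontr)
    assume "\<not> (\<exists>j0<2 * r + 1. c j0 \<noteq> 0)"
    then have "v = (\<lambda>_. 0)" by (simp add: v encode_def fun_eq_iff)
    with \<open>v \<noteq> (\<lambda>_. 0)\<close> show False ..
  qed
  then obtain j0 where "j0 < 2 * r + 1" "c j0 \<noteq> 0" by blast
  then show "q ^ (r - 1) * (q ^ r - q ^ (r - 1) - q + 1) + 1 \<le> hamming_weight (2 * r + 1 + n) v"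
    unfolding v by (rule hamming_weight_code_ge[OF c])
qed

lemma min_distance_dual_code:
  "2 \<le> min_distance (2 * r + 1 + n) dual
   \<and> min_distance (2 * r + 1 + n) dual \<le> 3"
proof -
  have "0 \<in> hermitian_zeros" using q_gt_1 by (simp add: hermitian_zeros_def)
  then obtain i0 where i0: "i0 < n" "d i0 = 0"
    using d_bij unfolding bij_betw_def by (metis imageE lessThan_iff)
  then have "{j. j < 2 * r + 1 \<and> G j i0 \<noteq> 0} = {0, 2}"
    using r_ge_2 by (auto simp: G1_def)
  moreover obtain v where v: "v \<in> dual" "v \<noteq> (\<lambda>_. 0)"
    and "hamming_weight (2 * r + 1 + n) v = Suc (card {j. j < 2 * r + 1 \<and> G j i0 \<noteq> 0})"
    using parity_check_word_in_dual_code[OF i0(1), of "2 * r + 1" G] G_in_Fq by blast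
  ultimately have "hamming_weight (2 * r + 1 + n) v = 3" by simp
  then have "min_distance (2 * r + 1 + n) dual \<le> 3"
    using min_distance_le[OF v, of "2 * r + 1 + n"] by simp
  moreover have "2 \<le> min_distance (2 * r + 1 + n) dual"
  proof (rule min_distance_ge[OF v])
    fix w assume "w \<in> dual" "w \<noteq> (\<lambda>_. 0)"
    then show "2 \<le> hamming_weight (2 * r + 1 + n) w"
      by (intro hamming_weight_dual_code_systematic_ge_2) (auto simp: G1_def intro!: exI[of _ 0])
  qed
  ultimately show ?thesis by simp
qed

end


theorem theorem3p11:
  fixes p e q r m :: nat and \<alpha> :: "'a::{finite,field}" and D :: "'a set" and d :: "nat \<Rightarrow> 'a"
  assumes "prime p" and "q = p ^ e" and "q > 2"
    and "r \<ge> 2" and "m = 2 * r"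
    and "card (UNIV :: 'a set) = q ^ m"
    and "D = {x. trace q r (x ^ (q ^ r + 1)) = 0}"
    and "bij_betw d {..<card D} D"
    and "\<forall>x::'a. x \<noteq> 0 \<longrightarrow> (\<exists>k. x = \<alpha> ^ k)"
  shows "card D = q ^ (r - 1) * (q ^ r - q + 1)
    \<and> (let n = card D; N = n + m + 1;
           C = gen_code q (m + 1) N (G1' q m \<alpha> d);
           Cd = dual_code q N C
       in has_dim q C (m + 1)
          \<and> min_distance N C \<ge> q ^ (r - 1) * (q ^ r - q ^ (r - 1) - q + 1) + 1
          \<and> has_dim q Cd n
          \<and> 2 \<le> min_distance N Cd \<and> min_distance N Cd \<le> 3)"
proof -
  have "q ^ 1 \<le> q ^ m" using assms(3-5) by (intro power_increasing) auto
  then have "\<alpha> \<noteq> 0" using assms(3,6,9) by (intro generator_nonzero) auto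
  interpret quadratic_extension p e q r \<alpha>
    using assms \<open>\<alpha> \<noteq> 0\<close> by unfold_locales auto
  have D: "D = hermitian_zeros" unfolding hermitian_zeros_def by (rule assms(7))
  interpret hermitian_code p e q r \<alpha> d "card D"
    using assms(8) D by unfold_locales simp_all
  have m: "m = 2 * r" by (rule assms(5))
  have C: "gen_code q (m + 1) (card D + m + 1) (G1' q m \<alpha> d) = code"
    unfolding G1'_eq_systematic m by (simp add: add.commute)
  have N: "card D + m + 1 = 2 * r + 1 + card D" using m by simp
  have "has_dim q code (2 * r + 1)"
    by (rule has_dim_gen_code_systematic)
  moreover have "has_dim q dual (card D)"
    by (rule has_dim_dual_code_systematic) (rule G_in_Fq)
  ultimately show ?thesis
    unfolding Let_def C unfolding N unfolding m
    using card_hermitian_zeros[folded D] min_distance_code_ge min_distance_dual_code by blast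
qed

end
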